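(* Let $k,a,b$ be positive real numbers and $\{S^{(a,b)}_{k,n}\}_{n\ge0}$ the $k$-FL sequence, and let $\alpha>\beta$ be the roots of $x^2-kx-1$. For any real number $p$ with $p\notin\{0,\alpha,\beta\}$ and any integer $n\ge1$, $\sum_{i=1}^n\frac{S^{(a,b)}_{k,i}}{p^i}=\frac{1}{(p^2-pk-1)p^n}\Big(-S^{(a,b)}_{k,n}-pS^{(a,b)}_{k,n+1}+p^{n+1}(a+bk)+2bp^n\Big)$.
   Context: The $k$-FL sequence (for positive reals $k,a,b$) is $S^{(a,b)}_{k,0}=2b$, $S^{(a,b)}_{k,1}=bk+a$, $S^{(a,b)}_{k,n}=kS^{(a,b)}_{k,n-1}+S^{(a,b)}_{k,n-2}$. *)

theory Defs
  imports Complex_Main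
begin

fun kFL :: "real \<Rightarrow> real \<Rightarrow> real \<Rightarrow> nat \<Rightarrow> real" where
  "kFL k a b 0 = 2 * b"
| "kFL k a b (Suc 0) = b * k + a"
| "kFL k a b (Suc (Suc n)) = k * kFL k a b (Suc n) + kFL k a b n"

end

theory Submission
  imports Defs
begin

text \<open>Multiplying the sum by \<open>p\<^sup>2 - p k - 1\<close> and using the recurrence, all terms telescope
  except the two at each end; the hypotheses on \<open>\<alpha>\<close> and \<open>\<beta>\<close> only serve to show that
  \<open>p\<^sup>2 - p k - 1 = (p - \<alpha>) (p - \<beta>)\<close> is nonzero, so that one may divide by it.\<close>

lemma recurrence_weighted_sum:
  fixes s :: "nat \<Rightarrow> 'a::field" and k p :: 'a
  assumes rec: "\<And>m. s (Suc (Suc m)) = k * s (Suc m) + s m"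
    and "p \<noteq> 0"
  shows "(p\<^sup>2 - p * k - 1) * p ^ n * (\<Sum>i=1..n. s i / p ^ i) =
    - s n - p * s (n + 1) + p ^ (n + 1) * s 1 + p ^ n * s 0"
proof (induction n)
  case 0
  then show ?case by simp
next
  case (Suc n)
  have last_term: "p ^ Suc n * (s (Suc n) / p ^ Suc n) = s (Suc n)"
    using \<open>p \<noteq> 0\<close> by simp
  have "(p\<^sup>2 - p * k - 1) * p ^ Suc n * (\<Sum>i=1..Suc n. s i / p ^ i)
      = p * ((p\<^sup>2 - p * k - 1) * p ^ n * (\<Sum>i=1..n. s i / p ^ i))
        + (p\<^sup>2 - p * k - 1) * s (Suc n)"
    using last_term by (simp add: algebra_simps)
  also have "\<dots> = - s (Suc n) - p * s (Suc n + 1) + p ^ (Suc n + 1) * s 1 + p ^ Suc n * s 0"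
    unfolding Suc.IH using rec[of n] by (simp add: algebra_simps power2_eq_square)
  finally show ?case .
qed

lemma quadratic_eq_prod_roots:
  fixes k \<alpha> \<beta> x :: "'a::field"
  assumes "\<alpha>\<^sup>2 - k * \<alpha> - 1 = 0" and "\<beta>\<^sup>2 - k * \<beta> - 1 = 0" and "\<alpha> \<noteq> \<beta>"
  shows "x\<^sup>2 - x * k - 1 = (x - \<alpha>) * (x - \<beta>)"
proof -
  have "(\<alpha> - \<beta>) * (\<alpha> + \<beta> - k) = 0"
    using assms(1,2) by (simp add: algebra_simps power2_eq_square)
  then have sum: "\<alpha> + \<beta> = k"
    using assms(3) by simp
  have prod: "\<alpha> * \<beta> = -1"
    using assms(1) by (simp add: algebra_simps power2_eq_square flip: sum)
      (simp add: minus_equation_iff)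
  show ?thesis
    by (simp add: algebra_simps power2_eq_square flip: sum prod)
qed

theorem theorem4p27:
  fixes k a b \<alpha> \<beta> p :: real and n :: nat
  assumes "k > 0" and "a > 0" and "b > 0"
    and "\<alpha>\<^sup>2 - k * \<alpha> - 1 = 0" and "\<beta>\<^sup>2 - k * \<beta> - 1 = 0" and "\<alpha> > \<beta>"
    and "p \<noteq> 0" and "p \<noteq> \<alpha>" and "p \<noteq> \<beta>"
    and "n \<ge> 1"
  shows "(\<Sum>i=1..n. kFL k a b i / p ^ i) =
    1 / ((p\<^sup>2 - p * k - 1) * p ^ n) *
      (- kFL k a b n - p * kFL k a b (n + 1) + p ^ (n + 1) * (a + b * k) + 2 * b * p ^ n)"
proof -
  have "p\<^sup>2 - p * k - 1 = (p - \<alpha>) * (p - \<beta>)"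
    using quadratic_eq_prod_roots assms(4-6) by force
  then have "(p\<^sup>2 - p * k - 1) * p ^ n \<noteq> 0"
    using assms(7-9) by simp
  moreover have "(p\<^sup>2 - p * k - 1) * p ^ n * (\<Sum>i=1..n. kFL k a b i / p ^ i) =
      - kFL k a b n - p * kFL k a b (n + 1) + p ^ (n + 1) * (a + b * k) + 2 * b * p ^ n"
    using recurrence_weighted_sum[of "kFL k a b" k p n] assms(7)
    by (simp add: algebra_simps)
  ultimately show ?thesis
    by (simp add: field_simps)
qed

end
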